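(* Let $f:(L',\alpha_{L'})\to(L,\alpha_L)$ be an $\alpha$-cover and let $C=\mathfrak{uce}_\alpha(f)(\mathrm{Ker}\,U_{\alpha'})\subseteq\mathfrak{uce}_\alpha(L)$. For any $h\in\mathrm{Aut}(L,\alpha_L)$ there exists $\theta_h\in\mathrm{Aut}(L',\alpha_{L'})$ with $f\circ\theta_h=h\circ f$ if and only if the automorphism $\mathfrak{uce}_\alpha(h)$ of $\mathfrak{uce}_\alpha(L)$ satisfies $\mathfrak{uce}_\alpha(h)(C)=C$. In that case $\theta_h$ is uniquely determined by $f\circ\theta_h=h\circ f$ and $\theta_h(\mathrm{Ker}\,f)=\mathrm{Ker}\,f$. Moreover the map $\Theta:\{h\in\mathrm{Aut}(L,\alpha_L):\mathfrak{uce}_\alpha(h)(C)=C\}\to\{g\in\mathrm{Aut}(L',\alpha_{L'}):g(\mathrm{Ker}\,f)=\mathrm{Ker}\,f\}$, $h\mapsto\theta_h$, is a group isomorphism.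
   Context: Hom-Leibniz algebras are multiplicative: $(L,\alpha_L)$ is a $\mathbb{K}$-vector space with bilinear bracket and linear $\alpha_L$ such that $[\alpha_L(x),[y,z]]=[[x,y],\alpha_L(z)]-[[x,z],\alpha_L(y)]$ and $\alpha_L[x,y]=[\alpha_L(x),\alpha_L(y)]$; homomorphisms preserve brackets and commute with structure maps; $\mathrm{Aut}(L,\alpha_L)$ is the group of bijective homomorphisms $L\to L$. $Z(K)=\{x:[x,y]=0=[y,x]\ \forall y\}$. $(L,\alpha_L)$ is $\alpha$-perfect if $L=[\alpha_L(L),\alpha_L(L)]$. A central extension is a surjective homomorphism $\pi$ with $\mathrm{Ker}\,\pi\subseteq Z(K)$. An $\alpha$-cover is a central extension $f:(L',\alpha_{L'})\to(L,\alpha_L)$ with $(L',\alpha_{L'})$ $\alpha$-perfect (then $L$ is $\alpha$-perfect too). For $\alpha$-perfect $(L,\alpha_L)$: $I_L\subseteq\alpha_L(L)\otimes\alpha_L(L)$ is spanned by $-[x_1,x_2]\otimes\alpha_L(x_3)+[x_1,x_3]\otimes\alpha_L(x_2)+\alpha_L(x_1)\otimes[x_2,x_3]$; $\mathfrak{uce}_\alpha(L)=(\alpha_L(L)\otimes\alpha_L(L))/I_L$ with classes $\{\alpha_L(x_1),\alpha_L(x_2)\}$, bracket $[\{a,b\},\{c,e\}]=\{[a,b],[c,e]\}$, endomorphism $\overline{\alpha}\{\alpha_L(x_1),\alpha_L(x_2)\}=\{\alpha_L^2(x_1),\alpha_L^2(x_2)\}$, and $U_\alpha:\mathfrak{uce}_\alpha(L)\to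 L$, $U_\alpha\{a,b\}=[a,b]$ (the universal $\alpha$-central extension of $L$); $U_{\alpha'}$ is the same for $L'$. For a homomorphism $g$ of $\alpha$-perfect algebras, $\mathfrak{uce}_\alpha(g)\{\alpha(x_1),\alpha(x_2)\}=\{\alpha(g(x_1)),\alpha(g(x_2))\}$. *)

theory Defs
  imports Main "HOL.Vector_Spaces"
begin

definition hom_leibniz ::
  "('k::field \<Rightarrow> 'a::ab_group_add \<Rightarrow> 'a) \<Rightarrow> ('a \<Rightarrow> 'a \<Rightarrow> 'a) \<Rightarrow> ('a \<Rightarrow> 'a) \<Rightarrow> bool" where
  "hom_leibniz s br al \<longleftrightarrow>
     vector_space s \<and>
     (\<forall>x. Vector_Spaces.linear s s (br x)) \<and> (\<forall>y. Vector_Spaces.linear s s (\<lambda>x. br x y)) \<and>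
     Vector_Spaces.linear s s al \<and>
     (\<forall>x y z. br (al x) (br y z) = br (br x y) (al z) - br (br x z) (al y)) \<and>
     (\<forall>x y. al (br x y) = br (al x) (al y))"

definition hl_hom ::
  "('k::field \<Rightarrow> 'b::ab_group_add \<Rightarrow> 'b) \<Rightarrow> ('b \<Rightarrow> 'b \<Rightarrow> 'b) \<Rightarrow> ('b \<Rightarrow> 'b) \<Rightarrow>
   ('k \<Rightarrow> 'a::ab_group_add \<Rightarrow> 'a) \<Rightarrow> ('a \<Rightarrow> 'a \<Rightarrow> 'a) \<Rightarrow> ('a \<Rightarrow> 'a) \<Rightarrow> ('b \<Rightarrow> 'a) \<Rightarrow> bool" where
  "hl_hom s1 br1 al1 s2 br2 al2 g \<longleftrightarrow>
     Vector_Spaces.linear s1 s2 g \<and> (\<forall>x y. g (br1 x y) = br2 (g x) (g y)) \<and> g \<circ> al1 = al2 \<circ> g"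

definition hl_Aut ::
  "('k::field \<Rightarrow> 'a::ab_group_add \<Rightarrow> 'a) \<Rightarrow> ('a \<Rightarrow> 'a \<Rightarrow> 'a) \<Rightarrow> ('a \<Rightarrow> 'a) \<Rightarrow> ('a \<Rightarrow> 'a) set" where
  "hl_Aut s br al = {g. hl_hom s br al s br al g \<and> bij g}"

definition hl_center :: "('a \<Rightarrow> 'a \<Rightarrow> 'a::ab_group_add) \<Rightarrow> 'a set" where
  "hl_center br = {x. \<forall>y. br x y = 0 \<and> br y x = 0}"

definition hl_ker :: "('b \<Rightarrow> 'a::zero) \<Rightarrow> 'b set" where
  "hl_ker g = {x. g x = 0}"

definition alpha_perfect ::
  "('k::field \<Rightarrow> 'a::ab_group_add \<Rightarrow> 'a) \<Rightarrow> ('a \<Rightarrow> 'a \<Rightarrow> 'a) \<Rightarrow> ('a \<Rightarrow> 'a) \<Rightarrow> bool" where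
  "alpha_perfect s br al \<longleftrightarrow> module.span s {br (al x) (al y) | x y. True} = UNIV"

definition central_extension ::
  "('k::field \<Rightarrow> 'b::ab_group_add \<Rightarrow> 'b) \<Rightarrow> ('b \<Rightarrow> 'b \<Rightarrow> 'b) \<Rightarrow> ('b \<Rightarrow> 'b) \<Rightarrow>
   ('k \<Rightarrow> 'a::ab_group_add \<Rightarrow> 'a) \<Rightarrow> ('a \<Rightarrow> 'a \<Rightarrow> 'a) \<Rightarrow> ('a \<Rightarrow> 'a) \<Rightarrow> ('b \<Rightarrow> 'a) \<Rightarrow> bool" where
  "central_extension s1 br1 al1 s2 br2 al2 g \<longleftrightarrow>
     hl_hom s1 br1 al1 s2 br2 al2 g \<and> surj g \<and> hl_ker g \<subseteq> hl_center br1"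

definition alpha_cover ::
  "('k::field \<Rightarrow> 'b::ab_group_add \<Rightarrow> 'b) \<Rightarrow> ('b \<Rightarrow> 'b \<Rightarrow> 'b) \<Rightarrow> ('b \<Rightarrow> 'b) \<Rightarrow>
   ('k \<Rightarrow> 'a::ab_group_add \<Rightarrow> 'a) \<Rightarrow> ('a \<Rightarrow> 'a \<Rightarrow> 'a) \<Rightarrow> ('a \<Rightarrow> 'a) \<Rightarrow> ('b \<Rightarrow> 'a) \<Rightarrow> bool" where
  "alpha_cover s1 br1 al1 s2 br2 al2 g \<longleftrightarrow>
     central_extension s1 br1 al1 s2 br2 al2 g \<and> alpha_perfect s1 br1 al1"

text \<open>Formal finite K-linear combinations of pairs (x,y), i.e. the free vector
 space on L x L, represented as finitely supported functions.\<close>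

definition fsupp :: "('x \<Rightarrow> 'k::zero) \<Rightarrow> 'x set" where
  "fsupp c = {p. c p \<noteq> 0}"

definition FSall :: "('x \<times> 'x \<Rightarrow> 'k::zero) set" where
  "FSall = {c. finite (fsupp c)}"

definition fdelta :: "'x \<Rightarrow> 'x \<Rightarrow> ('x \<times> 'x \<Rightarrow> 'k::{zero,one})" where
  "fdelta a b = (\<lambda>p. if p = (a, b) then 1 else 0)"

definition fspan :: "('x \<times> 'x \<Rightarrow> 'k::field) set \<Rightarrow> ('x \<times> 'x \<Rightarrow> 'k) set" where
  "fspan S = {v. \<exists>(n::nat) (cs::nat \<Rightarrow> 'k) vs.
                  (\<forall>i<n. vs i \<in> S) \<and> v = (\<lambda>p. \<Sum>i<n. cs i * vs i p)}"

text \<open>Bilinearity relations: their span is the kernel of the free space onto L (x) L.\<close>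
definition tens_rel :: "('k::field \<Rightarrow> 'a::ab_group_add \<Rightarrow> 'a) \<Rightarrow> ('a \<times> 'a \<Rightarrow> 'k) set" where
  "tens_rel s =
     {(\<lambda>p. fdelta (a + a') b p - fdelta a b p - fdelta a' b p) | a a' b. True} \<union>
     {(\<lambda>p. fdelta a (b + b') p - fdelta a b p - fdelta a b' p) | a b b'. True} \<union>
     {(\<lambda>p. fdelta (s c a) b p - c * fdelta a b p) | c a b. True} \<union>
     {(\<lambda>p. fdelta a (s c b) p - c * fdelta a b p) | c a b. True}"

definition I_gen :: "('a \<Rightarrow> 'a \<Rightarrow> 'a) \<Rightarrow> ('a \<Rightarrow> 'a) \<Rightarrow> ('a \<times> 'a \<Rightarrow> 'k::field) set" where
  "I_gen br al =
     {(\<lambda>p. - fdelta (br x1 x2) (al x3) p + fdelta (br x1 x3) (al x2) p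
            + fdelta (al x1) (br x2 x3) p) | x1 x2 x3. True}"

definition uce_rel ::
  "('k::field \<Rightarrow> 'a::ab_group_add \<Rightarrow> 'a) \<Rightarrow> ('a \<Rightarrow> 'a \<Rightarrow> 'a) \<Rightarrow> ('a \<Rightarrow> 'a) \<Rightarrow> ('a \<times> 'a \<Rightarrow> 'k) set" where
  "uce_rel s br al = fspan (tens_rel s \<union> I_gen br al)"

text \<open>Formal combinations of pairs from al(L) x al(L) (representing al(L) (x) al(L)).\<close>
definition FreeA :: "('a \<Rightarrow> 'a) \<Rightarrow> ('a \<times> 'a \<Rightarrow> 'k::zero) set" where
  "FreeA al = {c \<in> FSall. \<forall>p. c p \<noteq> 0 \<longrightarrow> fst p \<in> range al \<and> snd p \<in> range al}"

definition ucls ::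
  "('k::field \<Rightarrow> 'a::ab_group_add \<Rightarrow> 'a) \<Rightarrow> ('a \<Rightarrow> 'a \<Rightarrow> 'a) \<Rightarrow> ('a \<Rightarrow> 'a) \<Rightarrow>
   ('a \<times> 'a \<Rightarrow> 'k) \<Rightarrow> ('a \<times> 'a \<Rightarrow> 'k) set" where
  "ucls s br al v = {w \<in> FSall. (\<lambda>p. v p - w p) \<in> uce_rel s br al}"

text \<open>The carrier of uce_alpha(L) = (al(L) (x) al(L)) / I_L.\<close>
definition uce_set ::
  "('k::field \<Rightarrow> 'a::ab_group_add \<Rightarrow> 'a) \<Rightarrow> ('a \<Rightarrow> 'a \<Rightarrow> 'a) \<Rightarrow> ('a \<Rightarrow> 'a) \<Rightarrow>
   ('a \<times> 'a \<Rightarrow> 'k) set set" where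
  "uce_set s br al = ucls s br al ` FreeA al"

definition fpush :: "('b \<Rightarrow> 'a) \<Rightarrow> ('b \<times> 'b \<Rightarrow> 'k::comm_monoid_add) \<Rightarrow> ('a \<times> 'a \<Rightarrow> 'k)" where
  "fpush g c = (\<lambda>q. \<Sum>p \<in> {p. c p \<noteq> 0 \<and> (g (fst p), g (snd p)) = q}. c p)"

text \<open>uce_alpha(g): {al(x1),al(x2)} |-> {al(g x1), al(g x2)} = {g(al x1), g(al x2)},
  extended linearly; computed on a representative.\<close>
definition uce_map ::
  "('b \<Rightarrow> 'b) \<Rightarrow> ('k::field \<Rightarrow> 'a::ab_group_add \<Rightarrow> 'a) \<Rightarrow> ('a \<Rightarrow> 'a \<Rightarrow> 'a) \<Rightarrow> ('a \<Rightarrow> 'a) \<Rightarrow>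
   ('b \<Rightarrow> 'a) \<Rightarrow> ('b \<times> 'b \<Rightarrow> 'k) set \<Rightarrow> ('a \<times> 'a \<Rightarrow> 'k) set" where
  "uce_map al1 s2 br2 al2 g X = ucls s2 br2 al2 (fpush g (SOME v. v \<in> X \<inter> FreeA al1))"

text \<open>U_alpha: {a,b} |-> [a,b], extended linearly; computed on a representative.\<close>
definition uce_U ::
  "('k::field \<Rightarrow> 'a::ab_group_add \<Rightarrow> 'a) \<Rightarrow> ('a \<Rightarrow> 'a \<Rightarrow> 'a) \<Rightarrow> ('a \<Rightarrow> 'a) \<Rightarrow>
   ('a \<times> 'a \<Rightarrow> 'k) set \<Rightarrow> 'a" where
  "uce_U s br al X =
     (let v = SOME v. v \<in> X \<inter> FreeA al in \<Sum>p \<in> fsupp v. s (v p) (br (fst p) (snd p)))"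

definition uce_ker ::
  "('k::field \<Rightarrow> 'a::ab_group_add \<Rightarrow> 'a) \<Rightarrow> ('a \<Rightarrow> 'a \<Rightarrow> 'a) \<Rightarrow> ('a \<Rightarrow> 'a) \<Rightarrow>
   ('a \<times> 'a \<Rightarrow> 'k) set set" where
  "uce_ker s br al = {X \<in> uce_set s br al. uce_U s br al X = 0}"

end

theory Submission
  imports Defs
begin

text \<open>Choose a section \<open>sec\<close> of \<open>f\<close>. Since \<open>Ker f\<close> is central,
  \<open>(a, b) \<mapsto> [sec a, sec b]\<close> is a well-defined bilinear map satisfying the relations
  \<open>I_L\<close>, so it induces a linear map \<open>uce\<^sub>\<alpha>(L) \<rightarrow> L'\<close>; it is onto because \<open>L'\<close> is
  \<open>\<alpha>\<close>-perfect, and its kernel is \<open>C\<close>. A homomorphism \<open>\<theta>\<close> over \<open>h\<close> must send the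
  image of a class \<open>X\<close> to the image of \<open>uce\<^sub>\<alpha>(h) X\<close>, which determines \<open>\<theta>\<close>, and this
  prescription is well defined precisely when \<open>uce\<^sub>\<alpha>(h)\<close> maps \<open>C\<close> into \<open>C\<close>. Applied
  to \<open>h\<close> and \<open>h\<^sup>-\<^sup>1\<close> this gives the criterion for automorphisms. Conversely an
  automorphism of \<open>L'\<close> preserving \<open>Ker f\<close> descends to \<open>L \<cong> L' / Ker f\<close>, which inverts
  \<open>h \<mapsto> \<theta>\<^sub>h\<close>.\<close>

section \<open>Finitely supported formal combinations\<close>

lemma fspan_zero: "(\<lambda>p. 0) \<in> fspan S"
  unfolding fspan_def by (rule CollectI, rule exI[of _ 0]) auto

lemma fspan_add_scaled:
  assumes w: "w \<in> fspan S" and x: "x \<in> S"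
  shows "(\<lambda>p. c * x p + w p) \<in> fspan S"
proof -
  from w obtain n :: nat and cs vs where vs: "\<forall>i<n. vs i \<in> S" and w_eq: "w = (\<lambda>p. \<Sum>i<n. cs i * vs i p)"
    unfolding fspan_def by blast
  have "(\<lambda>p. c * x p + w p) = (\<lambda>p. \<Sum>i<Suc n. (cs(n:=c)) i * (vs(n:=x)) i p)"
    by (simp add: w_eq add.commute)
  moreover have "\<forall>i<Suc n. (vs(n:=x)) i \<in> S" using vs x by (auto simp: less_Suc_eq)
  ultimately show ?thesis unfolding fspan_def by blast
qed

lemma fspan_induct[consumes 1, case_names zero add_scaled]:
  assumes v: "v \<in> fspan S" and zero: "P (\<lambda>p. 0)"
    and add_scaled: "\<And>c x w. x \<in> S \<Longrightarrow> w \<in> fspan S \<Longrightarrow> P w \<Longrightarrow> P (\<lambda>p. c * x p + w p)"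
  shows "P v"
proof -
  from v obtain n :: nat and cs vs where vs: "\<forall>i<n. vs i \<in> S" and v_eq: "v = (\<lambda>p. \<Sum>i<n. cs i * vs i p)"
    unfolding fspan_def by blast
  have "(\<lambda>p. \<Sum>i<m. cs i * vs i p) \<in> fspan S \<and> P (\<lambda>p. \<Sum>i<m. cs i * vs i p)" if "m \<le> n" for m
    using that
  proof (induction m)
    case 0
    then show ?case using zero fspan_zero by simp
  next
    case (Suc m)
    have IH: "(\<lambda>p. \<Sum>i<m. cs i * vs i p) \<in> fspan S" "P (\<lambda>p. \<Sum>i<m. cs i * vs i p)"
      using Suc by simp_all
    have "(\<lambda>p. \<Sum>i<Suc m. cs i * vs i p) = (\<lambda>p. cs m * vs m p + (\<Sum>i<m. cs i * vs i p))"
      by (simp add: add.commute)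
    moreover have "vs m \<in> S" using vs Suc.prems by simp
    ultimately show ?case using IH add_scaled fspan_add_scaled by simp
  qed
  then show ?thesis using v_eq by simp
qed

lemma fspan_add:
  assumes "v \<in> fspan S" and w: "w \<in> fspan S"
  shows "(\<lambda>p. v p + w p) \<in> fspan S"
  using assms(1)
proof (induction v rule: fspan_induct)
  case zero
  then show ?case using w by simp
next
  case (add_scaled c x u)
  then show ?case using fspan_add_scaled[of "\<lambda>p. u p + w p" S x c] by (simp add: add.assoc)
qed

lemma fspan_scale:
  assumes "v \<in> fspan S"
  shows "(\<lambda>p. a * v p) \<in> fspan S"
  using assms
proof (induction v rule: fspan_induct)
  case zero
  then show ?case using fspan_zero by simp
next
  case (add_scaled c x u)
  then show ?case using fspan_add_scaled[of "\<lambda>p. a * u p" S x "a * c"] by (simp add: algebra_simps)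
qed

lemma fspan_neg: "v \<in> fspan S \<Longrightarrow> (\<lambda>p. - v p) \<in> fspan S"
  using fspan_scale[of v S "-1"] by simp

lemma fspan_diff: "v \<in> fspan S \<Longrightarrow> w \<in> fspan S \<Longrightarrow> (\<lambda>p. v p - w p) \<in> fspan S"
  using fspan_add[of v S "\<lambda>p. - w p"] fspan_neg[of w S] by simp

lemma finite_fsupp_fspan:
  assumes "v \<in> fspan S" and "\<And>x. x \<in> S \<Longrightarrow> finite (fsupp x)"
  shows "finite (fsupp v)"
  using assms(1)
proof (induction v rule: fspan_induct)
  case zero
  then show ?case by (simp add: fsupp_def)
next
  case (add_scaled c x w)
  have "fsupp (\<lambda>p. c * x p + w p) \<subseteq> fsupp x \<union> fsupp w" by (auto simp: fsupp_def)
  then show ?case using add_scaled assms(2) finite_subset by blast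
qed

lemma finite_fsupp_fdelta[simp]: "finite (fsupp (fdelta a b :: _ \<Rightarrow> 'k::zero_neq_one))"
  and fsupp_fdelta: "fsupp (fdelta a b :: _ \<Rightarrow> 'k::zero_neq_one) = {(a, b)}"
  by (auto simp: fsupp_def fdelta_def)

lemma finite_fsupp_add[simp]:
  "finite (fsupp u) \<Longrightarrow> finite (fsupp v) \<Longrightarrow> finite (fsupp (\<lambda>p. u p + v p :: 'k::comm_ring_1))"
  by (rule finite_subset[of _ "fsupp u \<union> fsupp v"]) (auto simp: fsupp_def)

lemma finite_fsupp_diff[simp]:
  "finite (fsupp u) \<Longrightarrow> finite (fsupp v) \<Longrightarrow> finite (fsupp (\<lambda>p. u p - v p :: 'k::comm_ring_1))"
  by (rule finite_subset[of _ "fsupp u \<union> fsupp v"]) (auto simp: fsupp_def)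

lemma finite_fsupp_neg[simp]: "finite (fsupp u) \<Longrightarrow> finite (fsupp (\<lambda>p. - u p :: 'k::comm_ring_1))"
  by (simp add: fsupp_def)

lemma finite_fsupp_scale[simp]: "finite (fsupp u) \<Longrightarrow> finite (fsupp (\<lambda>p. c * u p :: 'k::comm_ring_1))"
  by (rule finite_subset[of _ "fsupp u"]) (auto simp: fsupp_def)

abbreviation pair_map :: "('x \<Rightarrow> 'y) \<Rightarrow> 'x \<times> 'x \<Rightarrow> 'y \<times> 'y" where
  "pair_map g p \<equiv> (g (fst p), g (snd p))"

lemma fpush_eq_sum:
  assumes "finite S" "fsupp c \<subseteq> S"
  shows "fpush g c q = (\<Sum>p\<in>{p\<in>S. pair_map g p = q}. c p)"
  unfolding fpush_def
  by (rule sum.mono_neutral_left) (use assms in \<open>auto simp: fsupp_def\<close>)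

lemma fsupp_fpush: "fsupp (fpush g c) \<subseteq> pair_map g ` fsupp c"
proof
  fix q assume "q \<in> fsupp (fpush g c)"
  then have "fpush g c q \<noteq> 0" by (simp add: fsupp_def)
  then have "{p. c p \<noteq> 0 \<and> pair_map g p = q} \<noteq> {}"
    unfolding fpush_def by (metis (no_types, lifting) sum.empty)
  then obtain p where "c p \<noteq> 0" "pair_map g p = q" by blast
  then show "q \<in> pair_map g ` fsupp c" by (simp add: fsupp_def rev_image_eqI)
qed

lemma finite_fsupp_fpush[simp]: "finite (fsupp c) \<Longrightarrow> finite (fsupp (fpush g c))"
  using fsupp_fpush finite_subset by blast

lemma fpush_add:
  fixes u v :: "_ \<Rightarrow> 'k::comm_ring_1"
  assumes "finite (fsupp u)" "finite (fsupp v)"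
  shows "fpush g (\<lambda>p. u p + v p) = (\<lambda>q. fpush g u q + fpush g v q)"
proof
  fix q
  let ?S = "fsupp u \<union> fsupp v"
  have fin: "finite ?S" and supp: "fsupp (\<lambda>p. u p + v p) \<subseteq> ?S"
    using assms by (auto simp: fsupp_def)
  show "fpush g (\<lambda>p. u p + v p) q = fpush g u q + fpush g v q"
    by (simp add: fpush_eq_sum[OF fin supp] fpush_eq_sum[OF fin] sum.distrib)
qed

lemma fpush_scale:
  fixes u :: "_ \<Rightarrow> 'k::comm_ring_1"
  assumes "finite (fsupp u)"
  shows "fpush g (\<lambda>p. a * u p) = (\<lambda>q. a * fpush g u q)"
proof
  fix q
  have "fsupp (\<lambda>p. a * u p) \<subseteq> fsupp u" by (auto simp: fsupp_def)
  then show "fpush g (\<lambda>p. a * u p) q = a * fpush g u q"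
    by (simp add: fpush_eq_sum[OF assms] sum_distrib_left)
qed

lemma fpush_diff:
  fixes u v :: "_ \<Rightarrow> 'k::comm_ring_1"
  assumes "finite (fsupp u)" "finite (fsupp v)"
  shows "fpush g (\<lambda>p. u p - v p) = (\<lambda>q. fpush g u q - fpush g v q)"
  using fpush_add[of u "\<lambda>p. (-1) * v p" g] fpush_scale[of v g "-1"] assms by simp

lemma fpush_zero: "fpush g (\<lambda>p. 0 :: 'k::comm_ring_1) = (\<lambda>q. 0)"
  by (simp add: fpush_def)

lemma fpush_fdelta: "fpush g (fdelta a b :: _ \<Rightarrow> 'k::comm_ring_1) = fdelta (g a) (g b)"
proof
  fix q
  have "fpush g (fdelta a b :: _ \<Rightarrow> 'k) q = (\<Sum>p\<in>{p\<in>{(a, b)}. pair_map g p = q}. fdelta a b p)"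
    by (rule fpush_eq_sum) (simp_all add: fsupp_fdelta)
  also have "{p\<in>{(a, b)}. pair_map g p = q} = (if q = (g a, g b) then {(a, b)} else {})" by auto
  finally show "fpush g (fdelta a b :: _ \<Rightarrow> 'k) q = fdelta (g a) (g b) q"
    by (simp add: fdelta_def)
qed

lemma fpush_comp:
  fixes c :: "_ \<Rightarrow> 'k::comm_ring_1"
  assumes fin: "finite (fsupp c)"
  shows "fpush g (fpush h c) = fpush (g \<circ> h) c"
proof
  fix q
  let ?S = "fsupp c"
  have fin_image: "finite (pair_map h ` ?S)" using fin by simp
  have "fpush g (fpush h c) q
      = (\<Sum>p\<in>{p\<in>pair_map h ` ?S. pair_map g p = q}. \<Sum>p'\<in>{p'\<in>?S. pair_map h p' = p}. c p')"
    by (simp add: fpush_eq_sum[OF fin_image fsupp_fpush] fpush_eq_sum[OF fin])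
  also have "\<dots> = (\<Sum>p\<in>pair_map h ` ?S. \<Sum>p'\<in>{p'\<in>?S. pair_map h p' = p}.
                    if pair_map g (pair_map h p') = q then c p' else 0)"
    by (rule sum.mono_neutral_cong_left) (use fin_image in auto)
  also have "\<dots> = (\<Sum>p'\<in>?S. if pair_map g (pair_map h p') = q then c p' else 0)"
    by (rule sum.image_gen[symmetric]) (use fin in auto)
  also have "\<dots> = fpush (g \<circ> h) c q"
    using fin by (simp add: fpush_eq_sum[OF fin] sum.inter_filter)
  finally show "fpush g (fpush h c) q = fpush (g \<circ> h) c q" .
qed

lemma fpush_id: "fpush (\<lambda>x. x) c = c"
proof
  fix q
  have "{p. c p \<noteq> 0 \<and> pair_map (\<lambda>x. x) p = q} = (if c q = 0 then {} else {q})" by auto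
  then show "fpush (\<lambda>x. x) c q = c q" unfolding fpush_def by simp
qed

definition feval :: "('k::comm_ring_1 \<Rightarrow> 'a::ab_group_add \<Rightarrow> 'a) \<Rightarrow> ('x \<Rightarrow> 'k) \<Rightarrow> ('x \<Rightarrow> 'a) \<Rightarrow> 'a"
  where "feval scale u \<phi> = (\<Sum>q\<in>fsupp u. scale (u q) (\<phi> q))"

context module
begin

lemma feval_eq_sum:
  assumes "finite S" "fsupp u \<subseteq> S"
  shows "feval scale u \<phi> = (\<Sum>q\<in>S. u q *s \<phi> q)"
  unfolding feval_def
  by (rule sum.mono_neutral_left) (use assms in \<open>auto simp: fsupp_def\<close>)

lemma feval_add:
  assumes "finite (fsupp u)" "finite (fsupp v)"
  shows "feval scale (\<lambda>p. u p + v p) \<phi> = feval scale u \<phi> + feval scale v \<phi>"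
proof -
  let ?S = "fsupp u \<union> fsupp v"
  have fin: "finite ?S" and supp: "fsupp (\<lambda>p. u p + v p) \<subseteq> ?S"
    using assms by (auto simp: fsupp_def)
  show ?thesis by (simp add: feval_eq_sum[OF fin supp] feval_eq_sum[OF fin] scale_left_distrib sum.distrib)
qed

lemma feval_scale:
  assumes "finite (fsupp u)"
  shows "feval scale (\<lambda>p. a * u p) \<phi> = a *s feval scale u \<phi>"
proof -
  have "fsupp (\<lambda>p. a * u p) \<subseteq> fsupp u" by (auto simp: fsupp_def)
  then show ?thesis by (simp add: feval_eq_sum[OF assms] scale_sum_right)
qed

lemma feval_diff:
  assumes "finite (fsupp u)" "finite (fsupp v)"
  shows "feval scale (\<lambda>p. u p - v p) \<phi> = feval scale u \<phi> - feval scale v \<phi>"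
  using feval_add[of u "\<lambda>p. (-1) * v p"] feval_scale[of v "-1"] assms by simp

lemma feval_zero: "feval scale (\<lambda>p. 0) \<phi> = 0"
  by (simp add: feval_def fsupp_def)

lemma feval_fdelta: "feval scale (fdelta a b) \<phi> = \<phi> (a, b)"
  unfolding feval_def fsupp_fdelta by (simp add: fdelta_def)

lemma feval_fpush:
  assumes fin: "finite (fsupp u)"
  shows "feval scale (fpush g u) \<phi> = feval scale u (\<lambda>p. \<phi> (pair_map g p))"
proof -
  let ?S = "fsupp u"
  have fin_image: "finite (pair_map g ` ?S)" using fin by simp
  have "feval scale (fpush g u) \<phi>
      = (\<Sum>q\<in>pair_map g ` ?S. \<Sum>p\<in>{p\<in>?S. pair_map g p = q}. u p *s \<phi> (pair_map g p))"
    by (simp add: feval_eq_sum[OF fin_image fsupp_fpush] fpush_eq_sum[OF fin] scale_sum_left)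
  also have "\<dots> = (\<Sum>p\<in>?S. u p *s \<phi> (pair_map g p))"
    by (rule sum.image_gen[symmetric]) (use fin in auto)
  finally show ?thesis by (simp add: feval_def)
qed

end

lemma linear_feval:
  assumes "Vector_Spaces.linear s1 s2 g"
  shows "g (feval s1 u \<phi>) = feval s2 u (\<lambda>q. g (\<phi> q))"
proof -
  interpret linear s1 s2 g by fact
  show ?thesis unfolding feval_def by (simp add: sum scale)
qed

section \<open>Hom-Leibniz algebras and their homomorphisms\<close>

lemma hom_leibniz_vector_space: "hom_leibniz s br al \<Longrightarrow> vector_space s"
  by (simp add: hom_leibniz_def)

lemma hom_leibniz_bilinear:
  assumes "hom_leibniz s br al"
  shows "br (x + x') y = br x y + br x' y" "br x (y + y') = br x y + br x y'"
    and "br (s c x) y = s c (br x y)" "br x (s c y) = s c (br x y)"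
  using assms by (auto simp: hom_leibniz_def linear_iff)

lemma hom_leibniz_identity:
  "hom_leibniz s br al \<Longrightarrow> br (al x) (br y z) = br (br x y) (al z) - br (br x z) (al y)"
  by (simp add: hom_leibniz_def)

lemma hom_leibniz_alpha_bracket: "hom_leibniz s br al \<Longrightarrow> al (br x y) = br (al x) (al y)"
  by (simp add: hom_leibniz_def)

text \<open>In the multiplicative setting \<open>[\<alpha>(x), \<alpha>(y)] = \<alpha>[x, y]\<close>, so \<open>\<alpha>\<close>-perfectness forces
  \<open>\<alpha>\<close> to be onto.\<close>

lemma alpha_perfect_surj_alpha:
  assumes L: "hom_leibniz s br al" and perfect: "alpha_perfect s br al"
  shows "surj al"
proof -
  interpret vector_space s using L by (rule hom_leibniz_vector_space)
  interpret A: linear s s al using L by (simp add: hom_leibniz_def)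
  have "subspace (range al)"
    using A.subspace_image[OF subspace_UNIV] by simp
  moreover have "{br (al x) (al y) | x y. True} \<subseteq> range al"
    using hom_leibniz_alpha_bracket[OF L] by (auto intro: range_eqI[OF sym])
  ultimately show ?thesis
    using perfect span_minimal unfolding alpha_perfect_def by blast
qed

lemma hl_hom_linear: "hl_hom s1 br1 al1 s2 br2 al2 g \<Longrightarrow> Vector_Spaces.linear s1 s2 g"
  by (simp add: hl_hom_def)

lemma hl_hom_bracket: "hl_hom s1 br1 al1 s2 br2 al2 g \<Longrightarrow> g (br1 x y) = br2 (g x) (g y)"
  by (simp add: hl_hom_def)

lemma hl_hom_alpha: "hl_hom s1 br1 al1 s2 br2 al2 g \<Longrightarrow> g (al1 x) = al2 (g x)"
  by (simp add: hl_hom_def fun_eq_iff)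

lemma hl_hom_comp:
  "hl_hom s1 br1 al1 s2 br2 al2 g \<Longrightarrow> hl_hom s2 br2 al2 s3 br3 al3 h \<Longrightarrow> hl_hom s1 br1 al1 s3 br3 al3 (h \<circ> g)"
  unfolding hl_hom_def by (auto simp: Vector_Spaces.linear_compose fun_eq_iff)

lemma hl_hom_id: "vector_space s \<Longrightarrow> hl_hom s br al s br al id"
  unfolding hl_hom_def by (auto simp: linear_iff)

lemma hl_hom_inv:
  assumes g: "hl_hom s br al s br al g" and "bij g"
  shows "hl_hom s br al s br al (inv g)"
proof -
  interpret linear s s g using g by (rule hl_hom_linear)
  have g_inv: "g (inv g y) = y" for y using \<open>bij g\<close> by (simp add: bij_is_surj surj_f_inv_f)
  have g_cancel: "x = y" if "g x = g y" for x y using \<open>bij g\<close> that by (simp add: bij_is_inj inj_eq)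
  have "inv g (x + y) = inv g x + inv g y" for x y by (rule g_cancel) (simp add: add g_inv)
  moreover have "inv g (s c x) = s c (inv g x)" for c x by (rule g_cancel) (simp add: scale g_inv)
  moreover have "inv g (br x y) = br (inv g x) (inv g y)" for x y
    by (rule g_cancel) (simp add: hl_hom_bracket[OF g] g_inv)
  moreover have "inv g (al x) = al (inv g x)" for x
    by (rule g_cancel) (simp add: hl_hom_alpha[OF g] g_inv)
  ultimately show ?thesis
    using hl_hom_linear[OF g] unfolding hl_hom_def by (auto simp: linear_iff fun_eq_iff)
qed

lemma hl_Aut_inv: "g \<in> hl_Aut s br al \<Longrightarrow> inv g \<in> hl_Aut s br al"
  unfolding hl_Aut_def using hl_hom_inv bij_imp_bij_inv by blast

lemma hl_Aut_comp: "g \<in> hl_Aut s br al \<Longrightarrow> h \<in> hl_Aut s br al \<Longrightarrow> g \<circ> h \<in> hl_Aut s br al"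
  unfolding hl_Aut_def using hl_hom_comp bij_comp by blast

lemma image_hl_ker_eq:
  fixes f :: "'b \<Rightarrow> 'a::zero"
  assumes comm: "f \<circ> \<theta> = h \<circ> f" and "surj \<theta>" "inj h" "h 0 = 0"
  shows "\<theta> ` hl_ker f = hl_ker f"
proof
  have f_\<theta>: "f (\<theta> x) = h (f x)" for x using comm by (simp add: fun_eq_iff)
  show "\<theta> ` hl_ker f \<subseteq> hl_ker f" using f_\<theta> \<open>h 0 = 0\<close> by (auto simp: hl_ker_def)
  show "hl_ker f \<subseteq> \<theta> ` hl_ker f"
  proof
    fix z assume z: "z \<in> hl_ker f"
    obtain x where x: "z = \<theta> x" using \<open>surj \<theta>\<close> by blast
    have "h (f x) = h 0" using z f_\<theta> \<open>h 0 = 0\<close> by (simp add: x hl_ker_def)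
    then have "x \<in> hl_ker f" using \<open>inj h\<close> by (simp add: inj_eq hl_ker_def)
    then show "z \<in> \<theta> ` hl_ker f" using x by blast
  qed
qed

lemma image_eq_iff_mutually_inverse:
  assumes "\<And>x. x \<in> C \<Longrightarrow> g (f x) = x" and "\<And>x. x \<in> C \<Longrightarrow> f (g x) = x"
  shows "f ` C = C \<longleftrightarrow> f ` C \<subseteq> C \<and> g ` C \<subseteq> C"
proof
  assume image_eq: "f ` C = C"
  have "g y \<in> C" if "y \<in> C" for y
  proof -
    obtain x where "x \<in> C" "y = f x" using \<open>y \<in> C\<close> image_eq by blast
    then show ?thesis using assms(1) by simp
  qed
  then show "f ` C \<subseteq> C \<and> g ` C \<subseteq> C" using image_eq by blast
next
  assume "f ` C \<subseteq> C \<and> g ` C \<subseteq> C"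
  moreover have "y \<in> f ` C" if "y \<in> C" "g y \<in> C" for y
    using that assms(2)[of y] by (metis image_eqI)
  ultimately show "f ` C = C" by blast
qed

section \<open>The universal \<open>\<alpha>\<close>-central extension\<close>

abbreviation uce_gens ::
  "('k::field \<Rightarrow> 'a::ab_group_add \<Rightarrow> 'a) \<Rightarrow> ('a \<Rightarrow> 'a \<Rightarrow> 'a) \<Rightarrow> ('a \<Rightarrow> 'a) \<Rightarrow> ('a \<times> 'a \<Rightarrow> 'k) set"
  where "uce_gens s br al \<equiv> tens_rel s \<union> I_gen br al"

lemma finite_fsupp_uce_gen: "x \<in> uce_gens s br al \<Longrightarrow> finite (fsupp x)"
  unfolding tens_rel_def I_gen_def by (elim UnE CollectE exE conjE) simp_all

lemma uce_rel_zero: "(\<lambda>p. 0) \<in> uce_rel s br al"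
  unfolding uce_rel_def by (rule fspan_zero)

lemma uce_rel_neg: "u \<in> uce_rel s br al \<Longrightarrow> (\<lambda>p. - u p) \<in> uce_rel s br al"
  unfolding uce_rel_def by (rule fspan_neg)

lemma uce_rel_diff:
  "u \<in> uce_rel s br al \<Longrightarrow> v \<in> uce_rel s br al \<Longrightarrow> (\<lambda>p. u p - v p) \<in> uce_rel s br al"
  unfolding uce_rel_def by (rule fspan_diff)

lemma fpush_uce_gen:
  assumes g: "hl_hom s1 br1 al1 s2 br2 al2 g" and x: "x \<in> uce_gens s1 br1 al1"
  shows "fpush g x \<in> uce_gens s2 br2 al2"
proof -
  interpret linear s1 s2 g using g by (rule hl_hom_linear)
  note fpush_simps = fpush_add fpush_diff fpush_scale fpush_fdelta
  from x[unfolded tens_rel_def I_gen_def] show ?thesis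
  proof (elim UnE CollectE exE conjE)
    fix a a' b assume "x = (\<lambda>p. fdelta (a + a') b p - fdelta a b p - fdelta a' b p)"
    then have "fpush g x = (\<lambda>p. fdelta (g a + g a') (g b) p - fdelta (g a) (g b) p - fdelta (g a') (g b) p)"
      by (simp add: fpush_simps add)
    then show ?thesis unfolding tens_rel_def by blast
  next
    fix a b b' assume "x = (\<lambda>p. fdelta a (b + b') p - fdelta a b p - fdelta a b' p)"
    then have "fpush g x = (\<lambda>p. fdelta (g a) (g b + g b') p - fdelta (g a) (g b) p - fdelta (g a) (g b') p)"
      by (simp add: fpush_simps add)
    then show ?thesis unfolding tens_rel_def by blast
  next
    fix c a b assume "x = (\<lambda>p. fdelta (s1 c a) b p - c * fdelta a b p)"
    then have "fpush g x = (\<lambda>p. fdelta (s2 c (g a)) (g b) p - c * fdelta (g a) (g b) p)"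
      by (simp add: fpush_simps scale)
    then show ?thesis unfolding tens_rel_def by blast
  next
    fix c a b assume "x = (\<lambda>p. fdelta a (s1 c b) p - c * fdelta a b p)"
    then have "fpush g x = (\<lambda>p. fdelta (g a) (s2 c (g b)) p - c * fdelta (g a) (g b) p)"
      by (simp add: fpush_simps scale)
    then show ?thesis unfolding tens_rel_def by blast
  next
    fix x1 x2 x3
    assume "x = (\<lambda>p. - fdelta (br1 x1 x2) (al1 x3) p + fdelta (br1 x1 x3) (al1 x2) p
                   + fdelta (al1 x1) (br1 x2 x3) p)"
    then have "fpush g x = (\<lambda>p. - fdelta (br2 (g x1) (g x2)) (al2 (g x3)) p
        + fdelta (br2 (g x1) (g x3)) (al2 (g x2)) p + fdelta (al2 (g x1)) (br2 (g x2) (g x3)) p)"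
      using fpush_scale[of "fdelta (br1 x1 x2) (al1 x3)" g "-1"]
      by (simp add: fpush_simps hl_hom_bracket[OF g] hl_hom_alpha[OF g])
    then show ?thesis unfolding I_gen_def by blast
  qed
qed

lemma fpush_uce_rel:
  assumes g: "hl_hom s1 br1 al1 s2 br2 al2 g" and v: "v \<in> uce_rel s1 br1 al1"
  shows "fpush g v \<in> uce_rel s2 br2 al2"
  using v unfolding uce_rel_def
proof (induction v rule: fspan_induct)
  case zero
  then show ?case by (simp add: fpush_zero fspan_zero)
next
  case (add_scaled c x w)
  have "finite (fsupp x)" "finite (fsupp w)"
    using add_scaled finite_fsupp_fspan finite_fsupp_uce_gen by blast+
  then have "fpush g (\<lambda>p. c * x p + w p) = (\<lambda>q. c * fpush g x q + fpush g w q)"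
    by (simp add: fpush_add fpush_scale)
  then show ?case using fspan_add_scaled[OF add_scaled(3) fpush_uce_gen[OF g add_scaled(1)]] by simp
qed

text \<open>Evaluation against such a \<open>\<phi>\<close> factors through \<open>uce\<^sub>\<alpha>(L)\<close>.\<close>

lemma feval_uce_rel:
  fixes s :: "'k::field \<Rightarrow> 'a::ab_group_add \<Rightarrow> 'a" and scale :: "'k \<Rightarrow> 'b::ab_group_add \<Rightarrow> 'b"
  assumes vs: "vector_space scale"
    and add_left: "\<And>a a' b. \<phi> (a + a', b) = \<phi> (a, b) + \<phi> (a', b)"
    and add_right: "\<And>a b b'. \<phi> (a, b + b') = \<phi> (a, b) + \<phi> (a, b')"
    and scale_left: "\<And>c a b. \<phi> (s c a, b) = scale c (\<phi> (a, b))"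
    and scale_right: "\<And>c a b. \<phi> (a, s c b) = scale c (\<phi> (a, b))"
    and I_identity: "\<And>x1 x2 x3. \<phi> (al x1, br x2 x3) = \<phi> (br x1 x2, al x3) - \<phi> (br x1 x3, al x2)"
    and v: "v \<in> uce_rel s br al"
  shows "feval scale v \<phi> = 0"
proof -
  interpret vector_space scale by fact
  note feval_simps = feval_diff feval_add feval_scale feval_fdelta
  have gen: "feval scale x \<phi> = 0" if "x \<in> uce_gens s br al" for x
    using that unfolding tens_rel_def I_gen_def
    by (elim UnE CollectE exE conjE)
      (simp_all add: feval_simps add_left add_right scale_left scale_right I_identity
        feval_scale[of "fdelta _ _" "-1", simplified])
  from v show ?thesis unfolding uce_rel_def
  proof (induction v rule: fspan_induct)
    case zero
    then show ?case by (rule feval_zero)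
  next
    case (add_scaled c x w)
    have "finite (fsupp x)" "finite (fsupp w)"
      using add_scaled finite_fsupp_fspan finite_fsupp_uce_gen by blast+
    then show ?case using gen[OF add_scaled(1)] add_scaled(3) by (simp add: feval_add feval_scale)
  qed
qed

lemma feval_bracket_uce_rel:
  assumes L: "hom_leibniz s br al" and v: "v \<in> uce_rel s br al"
  shows "feval s v (\<lambda>p. br (fst p) (snd p)) = 0"
  by (rule feval_uce_rel[OF hom_leibniz_vector_space[OF L] _ _ _ _ _ v])
    (simp_all add: hom_leibniz_bilinear[OF L] hom_leibniz_identity[OF L])

lemma FreeA_surj: "surj al \<Longrightarrow> FreeA al = FSall"
  by (auto simp: FreeA_def)

lemma ucls_self: "u \<in> FSall \<Longrightarrow> u \<in> ucls s br al u"
  unfolding ucls_def using uce_rel_zero by simp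

lemma ucls_eq_iff:
  assumes "u \<in> FSall" "v \<in> FSall"
  shows "ucls s br al u = ucls s br al v \<longleftrightarrow> (\<lambda>p. u p - v p) \<in> uce_rel s br al"
proof
  assume "ucls s br al u = ucls s br al v"
  then have "(\<lambda>p. v p - u p) \<in> uce_rel s br al"
    using ucls_self[OF assms(1), of s br al] by (simp add: ucls_def)
  from uce_rel_neg[OF this] show "(\<lambda>p. u p - v p) \<in> uce_rel s br al" by simp
next
  assume uv: "(\<lambda>p. u p - v p) \<in> uce_rel s br al"
  have "(\<lambda>p. u p - w p) \<in> uce_rel s br al \<longleftrightarrow> (\<lambda>p. v p - w p) \<in> uce_rel s br al" for w
    using uce_rel_diff[OF _ uv, of "\<lambda>p. u p - w p"] uce_rel_diff[OF _ uce_rel_neg[OF uv], of "\<lambda>p. v p - w p"]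
    by auto
  then show "ucls s br al u = ucls s br al v" unfolding ucls_def by auto
qed

text \<open>\<open>uce_map\<close> and \<open>uce_U\<close> act on a class through the representative chosen by \<open>SOME\<close>;
  once \<open>\<alpha>\<close> is onto, that representative differs from any given one by a relation.\<close>

lemma some_rep_ucls:
  fixes s br and u :: "'a::ab_group_add \<times> 'a \<Rightarrow> 'k::field"
  assumes "surj al" and u: "u \<in> FSall"
  defines "r \<equiv> SOME v. v \<in> ucls s br al u \<inter> FreeA al"
  shows "r \<in> FSall" "(\<lambda>p. u p - r p) \<in> uce_rel s br al"
proof -
  have "u \<in> ucls s br al u \<inter> FreeA al" using ucls_self[OF u, of s br al] u assms(1) by (simp add: FreeA_def)
  then have "r \<in> ucls s br al u \<inter> FreeA al"
    unfolding r_def by (rule someI[of "\<lambda>v. v \<in> ucls s br al u \<inter> FreeA al"])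
  then show "r \<in> FSall" "(\<lambda>p. u p - r p) \<in> uce_rel s br al" by (auto simp: ucls_def)
qed

lemma uce_map_ucls:
  fixes u :: "'b::ab_group_add \<times> 'b \<Rightarrow> 'k::field"
  assumes g: "hl_hom s1 br1 al1 s2 br2 al2 g" and "surj al1" and u: "u \<in> FSall"
  shows "uce_map al1 s2 br2 al2 g (ucls s1 br1 al1 u) = ucls s2 br2 al2 (fpush g u)"
proof -
  define r where "r \<equiv> SOME v. v \<in> ucls s1 br1 al1 u \<inter> FreeA al1"
  have r: "r \<in> FSall" "(\<lambda>p. u p - r p) \<in> uce_rel s1 br1 al1"
    using some_rep_ucls[OF assms(2) u] unfolding r_def by auto
  have fin: "finite (fsupp u)" "finite (fsupp r)" using u r by (auto simp: FSall_def)
  have "(\<lambda>q. fpush g u q - fpush g r q) \<in> uce_rel s2 br2 al2"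
    using fpush_uce_rel[OF g r(2)] by (simp add: fpush_diff[OF fin])
  then have "ucls s2 br2 al2 (fpush g r) = ucls s2 br2 al2 (fpush g u)"
    using ucls_eq_iff[of "fpush g r" "fpush g u"] uce_rel_neg fin by (force simp: FSall_def)
  then show ?thesis unfolding uce_map_def r_def by simp
qed

lemma uce_U_ucls:
  assumes L: "hom_leibniz s br al" and "surj al" and w: "w \<in> FSall"
  shows "uce_U s br al (ucls s br al w) = feval s w (\<lambda>p. br (fst p) (snd p))"
proof -
  interpret vector_space s using L by (rule hom_leibniz_vector_space)
  define r where "r \<equiv> SOME v. v \<in> ucls s br al w \<inter> FreeA al"
  have r: "r \<in> FSall" "(\<lambda>p. w p - r p) \<in> uce_rel s br al"
    using some_rep_ucls[OF assms(2) w] unfolding r_def by auto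
  have "feval s (\<lambda>p. w p - r p) (\<lambda>p. br (fst p) (snd p)) = 0"
    by (rule feval_bracket_uce_rel[OF L r(2)])
  then have "feval s r (\<lambda>p. br (fst p) (snd p)) = feval s w (\<lambda>p. br (fst p) (snd p))"
    using w r(1) by (simp add: feval_diff FSall_def)
  then show ?thesis unfolding uce_U_def r_def feval_def Let_def by simp
qed

lemma uce_ker_eq:
  assumes L: "hom_leibniz s br al" and "surj al"
  shows "uce_ker s br al = {ucls s br al w | w. w \<in> FSall \<and> feval s w (\<lambda>p. br (fst p) (snd p)) = 0}"
  using uce_U_ucls[OF assms] FreeA_surj[OF assms(2)] by (auto simp: uce_ker_def uce_set_def)

section \<open>Lifting automorphisms along an \<open>\<alpha>\<close>-cover\<close>

locale hl_cover =
  fixes s' :: "'k::field \<Rightarrow> 'b::ab_group_add \<Rightarrow> 'b" and br' :: "'b \<Rightarrow> 'b \<Rightarrow> 'b" and al' :: "'b \<Rightarrow> 'b"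
    and s :: "'k \<Rightarrow> 'a::ab_group_add \<Rightarrow> 'a" and br :: "'a \<Rightarrow> 'a \<Rightarrow> 'a" and al :: "'a \<Rightarrow> 'a"
    and f :: "'b \<Rightarrow> 'a"
  assumes L': "hom_leibniz s' br' al'"
    and L: "hom_leibniz s br al"
    and cover: "alpha_cover s' br' al' s br al f"
begin

interpretation V': vector_space s' using L' by (rule hom_leibniz_vector_space)
interpretation V: vector_space s using L by (rule hom_leibniz_vector_space)

lemma f_hom: "hl_hom s' br' al' s br al f"
  and f_surj: "surj f"
  using cover by (simp_all add: alpha_cover_def central_extension_def)

interpretation F: linear s' s f using f_hom by (rule hl_hom_linear)

lemma bracket'_cong:
  assumes "f a = f a'" "f b = f b'"
  shows "br' a b = br' a' b'"
proof -
  have central: "br' z y = 0" "br' y z = 0" if "f z = 0" for z y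
    using cover that by (auto simp: alpha_cover_def central_extension_def hl_ker_def hl_center_def)
  have "f (a' - a) = 0" "f (b' - b) = 0" using assms by (simp_all add: F.diff)
  note central = central[OF this(1)] central[OF this(2)]
  have "br' a' b' = br' (a + (a' - a)) (b + (b' - b))" by simp
  also have "\<dots> = br' a b + br' a (b' - b) + (br' (a' - a) b + br' (a' - a) (b' - b))"
    by (simp only: hom_leibniz_bilinear[OF L'] add_ac)
  also have "\<dots> = br' a b" using central by simp
  finally show ?thesis by simp
qed

definition sec :: "'a \<Rightarrow> 'b" where "sec = inv f"

lemma f_sec[simp]: "f (sec y) = y"
  unfolding sec_def using f_surj by (simp add: surj_f_inv_f)

text \<open>Summing the brackets of chosen preimages: by \<open>bracket'_cong\<close> this does not depend on the
  choice, and it induces the map \<open>uce\<^sub>\<alpha>(L) \<rightarrow> L'\<close> provided by the universal property.\<close>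

definition br_sec :: "'a \<times> 'a \<Rightarrow> 'b" where "br_sec q = br' (sec (fst q)) (sec (snd q))"

definition lift_U :: "('a \<times> 'a \<Rightarrow> 'k) \<Rightarrow> 'b" where "lift_U u = feval s' u br_sec"

lemma br_sec_f: "br_sec (f a, f b) = br' a b"
  unfolding br_sec_def by (rule bracket'_cong) simp_all

lemma br_sec_eq: "f a = x \<Longrightarrow> f b = y \<Longrightarrow> br_sec (x, y) = br' a b"
  using br_sec_f by blast

lemma lift_U_fpush_f: "finite (fsupp w) \<Longrightarrow> lift_U (fpush f w) = feval s' w (\<lambda>p. br' (fst p) (snd p))"
  unfolding lift_U_def by (simp add: V'.feval_fpush br_sec_f)

lemma f_lift_U: "f (lift_U u) = feval s u (\<lambda>p. br (fst p) (snd p))"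
  unfolding lift_U_def br_sec_def
  by (simp add: linear_feval[OF hl_hom_linear[OF f_hom]] hl_hom_bracket[OF f_hom])

lemma lift_U_uce_rel: "u \<in> uce_rel s br al \<Longrightarrow> lift_U u = 0"
  unfolding lift_U_def
proof (rule feval_uce_rel[OF V'.vector_space_axioms])
  fix a a' b b' c x y z
  have "br_sec (a + a', b) = br' (sec a + sec a') (sec b)"
    and "br_sec (a, b + b') = br' (sec a) (sec b + sec b')"
    and "br_sec (s c a, b) = br' (s' c (sec a)) (sec b)"
    and "br_sec (a, s c b) = br' (sec a) (s' c (sec b))"
    and "br_sec (al x, br y z) = br' (al' (sec x)) (br' (sec y) (sec z))"
    by (rule br_sec_eq; simp add: F.add F.scale hl_hom_alpha[OF f_hom] hl_hom_bracket[OF f_hom])+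
  moreover have "br_sec (br x y, al z) = br' (br' (sec x) (sec y)) (al' (sec z))" for x y z
    by (rule br_sec_eq) (simp_all add: hl_hom_alpha[OF f_hom] hl_hom_bracket[OF f_hom])
  ultimately show "br_sec (a + a', b) = br_sec (a, b) + br_sec (a', b)"
    and "br_sec (a, b + b') = br_sec (a, b) + br_sec (a, b')"
    and "br_sec (s c a, b) = s' c (br_sec (a, b))"
    and "br_sec (a, s c b) = s' c (br_sec (a, b))"
    and "br_sec (al x, br y z) = br_sec (br x y, al z) - br_sec (br x z, al y)"
    by (simp_all add: br_sec_def hom_leibniz_bilinear[OF L'] hom_leibniz_identity[OF L'])
qed

lemma lift_U_add: "finite (fsupp u) \<Longrightarrow> finite (fsupp v) \<Longrightarrow> lift_U (\<lambda>p. u p + v p) = lift_U u + lift_U v"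
  and lift_U_diff: "finite (fsupp u) \<Longrightarrow> finite (fsupp v) \<Longrightarrow> lift_U (\<lambda>p. u p - v p) = lift_U u - lift_U v"
  and lift_U_scale: "finite (fsupp u) \<Longrightarrow> lift_U (\<lambda>p. c * u p) = s' c (lift_U u)"
  and lift_U_zero: "lift_U (\<lambda>p. 0) = 0"
  and lift_U_fdelta: "lift_U (fdelta a b) = br' (sec a) (sec b)"
  unfolding lift_U_def by (simp_all add: V'.feval_zero V'.feval_add V'.feval_diff V'.feval_scale V'.feval_fdelta br_sec_def)

lemma lift_U_surj: "\<exists>u. finite (fsupp u) \<and> lift_U u = x"
proof -
  let ?T = "{x. \<exists>u. finite (fsupp u) \<and> lift_U u = x}"
  have "V'.subspace ?T"
  proof (rule V'.subspaceI)
    show "0 \<in> ?T"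
      using lift_U_zero by (auto intro!: exI[of _ "\<lambda>p. 0"] simp: fsupp_def)
    show "x + y \<in> ?T" if xy: "x \<in> ?T" "y \<in> ?T" for x y
    proof -
      obtain u v where "finite (fsupp u)" "lift_U u = x" "finite (fsupp v)" "lift_U v = y"
        using xy by blast
      then show ?thesis using lift_U_add by (auto intro!: exI[of _ "\<lambda>p. u p + v p"])
    qed
    show "s' c x \<in> ?T" if x: "x \<in> ?T" for c x
    proof -
      obtain u where "finite (fsupp u)" "lift_U u = x" using x by blast
      then show ?thesis using lift_U_scale by (auto intro!: exI[of _ "\<lambda>p. c * u p"])
    qed
  qed
  moreover have "{br' (al' x) (al' y) | x y. True} \<subseteq> ?T"
  proof clarify
    fix x y
    have "lift_U (fdelta (f (al' x)) (f (al' y))) = br' (al' x) (al' y)"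
      unfolding lift_U_fdelta by (rule bracket'_cong) simp_all
    then show "\<exists>u. finite (fsupp u) \<and> lift_U u = br' (al' x) (al' y)" by (metis finite_fsupp_fdelta)
  qed
  ultimately show ?thesis
    using cover V'.span_minimal unfolding alpha_cover_def alpha_perfect_def by blast
qed

lemma surj_al': "surj al'"
  using alpha_perfect_surj_alpha[OF L'] cover by (simp add: alpha_cover_def)

lemma surj_al: "surj al"
  using surj_al' f_surj hl_hom_alpha[OF f_hom] by (metis surj_def)

text \<open>The subspace \<open>C\<close> of the theorem, described through representatives.\<close>

definition ker_lift_U :: "('a \<times> 'a \<Rightarrow> 'k) set set" where
  "ker_lift_U = {ucls s br al u | u. u \<in> FSall \<and> lift_U u = 0}"

lemma ucls_mem_ker_lift_U: "v \<in> FSall \<Longrightarrow> ucls s br al v \<in> ker_lift_U \<longleftrightarrow> lift_U v = 0"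
proof
  assume v: "v \<in> FSall" and "ucls s br al v \<in> ker_lift_U"
  then obtain u where u: "u \<in> FSall" "lift_U u = 0" "ucls s br al v = ucls s br al u"
    unfolding ker_lift_U_def by auto
  then have "lift_U (\<lambda>p. v p - u p) = 0" using ucls_eq_iff v lift_U_uce_rel by blast
  then show "lift_U v = 0" using u v lift_U_diff by (simp add: FSall_def)
qed (auto simp: ker_lift_U_def)

lemma uce_map_f_uce_ker: "uce_map al' s br al f ` uce_ker s' br' al' = ker_lift_U"
  unfolding uce_ker_eq[OF L' surj_al']
proof safe
  fix w assume w: "w \<in> FSall" "feval s' w (\<lambda>p. br' (fst p) (snd p)) = 0"
  then show "uce_map al' s br al f (ucls s' br' al' w) \<in> ker_lift_U"
    using uce_map_ucls[OF f_hom surj_al' w(1)] lift_U_fpush_f ucls_mem_ker_lift_U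
    by (simp add: FSall_def)
next
  fix X assume "X \<in> ker_lift_U"
  then obtain u where u: "u \<in> FSall" "lift_U u = 0" and X: "X = ucls s br al u"
    unfolding ker_lift_U_def by blast
  define w where "w = fpush sec u"
  have w: "w \<in> FSall" using u by (simp add: w_def FSall_def)
  have fw: "fpush f w = u"
    using u fpush_comp[of u f sec] fpush_id[of u] by (simp add: w_def FSall_def o_def)
  have "feval s' w (\<lambda>p. br' (fst p) (snd p)) = lift_U (fpush f w)"
    using w lift_U_fpush_f by (simp add: FSall_def)
  then have "feval s' w (\<lambda>p. br' (fst p) (snd p)) = 0" using fw u by simp
  moreover have "X = uce_map al' s br al f (ucls s' br' al' w)"
    using uce_map_ucls[OF f_hom surj_al' w] fw X by simp
  ultimately show "X \<in> uce_map al' s br al f `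
      {ucls s' br' al' w |w. w \<in> FSall \<and> feval s' w (\<lambda>p. br' (fst p) (snd p)) = 0}"
    using w by blast
qed

lemma hl_hom_eq_if_f_comp_eq:
  assumes \<theta>1: "hl_hom s' br' al' s' br' al' \<theta>1" and \<theta>2: "hl_hom s' br' al' s' br' al' \<theta>2"
    and comm: "f \<circ> \<theta>1 = f \<circ> \<theta>2"
  shows "\<theta>1 = \<theta>2"
proof
  fix x
  obtain u where u: "lift_U u = x" using lift_U_surj by blast
  have "\<theta>1 (br_sec q) = \<theta>2 (br_sec q)" for q
    unfolding br_sec_def hl_hom_bracket[OF \<theta>1] hl_hom_bracket[OF \<theta>2]
    by (rule bracket'_cong) (use comm in \<open>simp_all add: fun_eq_iff\<close>)
  then show "\<theta>1 x = \<theta>2 x"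
    unfolding u[symmetric] lift_U_def linear_feval[OF hl_hom_linear[OF \<theta>1]] linear_feval[OF hl_hom_linear[OF \<theta>2]]
    by simp
qed

lemma lift_U_fpush:
  assumes \<theta>: "hl_hom s' br' al' s' br' al' \<theta>" and comm: "f \<circ> \<theta> = h \<circ> f" and u: "finite (fsupp u)"
  shows "lift_U (fpush h u) = \<theta> (lift_U u)"
proof -
  have "br_sec (pair_map h q) = \<theta> (br_sec q)" for q
    unfolding br_sec_def hl_hom_bracket[OF \<theta>]
    by (rule bracket'_cong) (use comm in \<open>simp_all add: fun_eq_iff\<close>)
  then show ?thesis
    unfolding lift_U_def V'.feval_fpush[OF u] linear_feval[OF hl_hom_linear[OF \<theta>]] by simp
qed

lemma al'_lift_U: "finite (fsupp u) \<Longrightarrow> al' (lift_U u) = lift_U (fpush al u)"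
  using lift_U_fpush[of al' al u] f_hom L' by (simp add: hl_hom_def hom_leibniz_def)

lemma uce_map_ker_lift_U_subset:
  assumes h: "hl_hom s br al s br al h" and \<theta>: "hl_hom s' br' al' s' br' al' \<theta>" and comm: "f \<circ> \<theta> = h \<circ> f"
  shows "uce_map al s br al h ` ker_lift_U \<subseteq> ker_lift_U"
proof clarify
  fix X assume "X \<in> ker_lift_U"
  then obtain u where u: "u \<in> FSall" "lift_U u = 0" and X: "X = ucls s br al u"
    unfolding ker_lift_U_def by blast
  interpret T: linear s' s' \<theta> using \<theta> by (rule hl_hom_linear)
  have "lift_U (fpush h u) = 0"
    using lift_U_fpush[OF \<theta> comm] u by (simp add: FSall_def)
  then show "uce_map al s br al h X \<in> ker_lift_U"
    using uce_map_ucls[OF h surj_al u(1)] ucls_mem_ker_lift_U u(1) by (simp add: X FSall_def)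
qed

lemma lift_U_fpush_eq_0:
  assumes h: "hl_hom s br al s br al h" and stable: "uce_map al s br al h ` ker_lift_U \<subseteq> ker_lift_U"
    and u: "finite (fsupp u)" "lift_U u = 0"
  shows "lift_U (fpush h u) = 0"
proof -
  have uF: "u \<in> FSall" using u by (simp add: FSall_def)
  then have "uce_map al s br al h (ucls s br al u) \<in> ker_lift_U"
    using stable ucls_mem_ker_lift_U u by blast
  then show ?thesis
    using uce_map_ucls[OF h surj_al uF] ucls_mem_ker_lift_U u by (simp add: FSall_def)
qed

definition induced_lift :: "('a \<Rightarrow> 'a) \<Rightarrow> 'b \<Rightarrow> 'b" where
  "induced_lift h x = lift_U (fpush h (SOME u. finite (fsupp u) \<and> lift_U u = x))"

context
  fixes h
  assumes h: "hl_hom s br al s br al h"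
    and stable: "uce_map al s br al h ` ker_lift_U \<subseteq> ker_lift_U"
begin

lemma induced_lift_lift_U:
  assumes u: "finite (fsupp u)"
  shows "induced_lift h (lift_U u) = lift_U (fpush h u)"
proof -
  define v where "v = (SOME v. finite (fsupp v) \<and> lift_U v = lift_U u)"
  have v: "finite (fsupp v)" "lift_U v = lift_U u"
    using someI[of "\<lambda>v. finite (fsupp v) \<and> lift_U v = lift_U u" u] u unfolding v_def by blast+
  have "lift_U (\<lambda>p. u p - v p) = 0" using u v lift_U_diff by simp
  then have "lift_U (fpush h (\<lambda>p. u p - v p)) = 0" using lift_U_fpush_eq_0[OF h stable] u v by simp
  then have "lift_U (fpush h v) = lift_U (fpush h u)" using u v by (simp add: fpush_diff lift_U_diff)
  then show ?thesis unfolding induced_lift_def v_def .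
qed

lemma f_induced_lift: "f (induced_lift h x) = h (f x)"
proof -
  obtain u where u: "finite (fsupp u)" "lift_U u = x" using lift_U_surj by blast
  have "f (induced_lift h x) = feval s u (\<lambda>p. h (br (fst p) (snd p)))"
    by (simp add: u(2)[symmetric] induced_lift_lift_U[OF u(1)] f_lift_U V.feval_fpush[OF u(1)]
        hl_hom_bracket[OF h])
  also have "\<dots> = h (f x)"
    unfolding u(2)[symmetric] f_lift_U linear_feval[OF hl_hom_linear[OF h]] ..
  finally show ?thesis .
qed

lemma linear_induced_lift: "Vector_Spaces.linear s' s' (induced_lift h)"
  unfolding linear_iff
proof (intro conjI allI V'.vector_space_axioms)
  fix x y c
  obtain u where u: "finite (fsupp u)" "lift_U u = x" using lift_U_surj by blast
  obtain v where v: "finite (fsupp v)" "lift_U v = y" using lift_U_surj by blast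
  show "induced_lift h (x + y) = induced_lift h x + induced_lift h y"
    using induced_lift_lift_U[of "\<lambda>p. u p + v p"] induced_lift_lift_U[OF u(1)] induced_lift_lift_U[OF v(1)] u v
    by (simp add: lift_U_add fpush_add)
  show "induced_lift h (s' c x) = s' c (induced_lift h x)"
    using induced_lift_lift_U[of "\<lambda>p. c * u p"] induced_lift_lift_U[OF u(1)] u
    by (simp add: lift_U_scale fpush_scale)
qed

lemma induced_lift_bracket: "induced_lift h (br' x y) = br' (induced_lift h x) (induced_lift h y)"
proof -
  have "br' x y = lift_U (fdelta (f x) (f y))" unfolding lift_U_fdelta by (rule bracket'_cong) simp_all
  then have "induced_lift h (br' x y) = lift_U (fdelta (h (f x)) (h (f y)))"
    using induced_lift_lift_U[of "fdelta (f x) (f y)"] by (simp add: fpush_fdelta)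
  also have "\<dots> = br' (induced_lift h x) (induced_lift h y)"
    unfolding lift_U_fdelta by (rule bracket'_cong) (simp_all add: f_induced_lift)
  finally show ?thesis .
qed

lemma induced_lift_alpha: "induced_lift h (al' x) = al' (induced_lift h x)"
proof -
  obtain u where u: "finite (fsupp u)" "lift_U u = x" using lift_U_surj by blast
  have "h \<circ> al = al \<circ> h" using hl_hom_alpha[OF h] by (simp add: fun_eq_iff)
  then show ?thesis
    using u by (simp add: al'_lift_U induced_lift_lift_U fpush_comp flip: u(2))
qed

lemma hl_hom_induced_lift: "hl_hom s' br' al' s' br' al' (induced_lift h)"
  and f_comp_induced_lift: "f \<circ> induced_lift h = h \<circ> f"
  using linear_induced_lift induced_lift_bracket induced_lift_alpha f_induced_lift
  by (simp_all add: hl_hom_def fun_eq_iff)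

end

lemma hom_lift_exists_iff:
  assumes h: "hl_hom s br al s br al h"
  shows "(\<exists>\<theta>. hl_hom s' br' al' s' br' al' \<theta> \<and> f \<circ> \<theta> = h \<circ> f) \<longleftrightarrow>
    uce_map al s br al h ` ker_lift_U \<subseteq> ker_lift_U"
  using uce_map_ker_lift_U_subset[OF h] hl_hom_induced_lift[OF h] f_comp_induced_lift[OF h] by blast

lemma aut_lift_exists_iff_hom_lifts:
  assumes h: "h \<in> hl_Aut s br al"
  shows "(\<exists>\<theta>\<in>hl_Aut s' br' al'. f \<circ> \<theta> = h \<circ> f) \<longleftrightarrow>
    (\<exists>\<theta>. hl_hom s' br' al' s' br' al' \<theta> \<and> f \<circ> \<theta> = h \<circ> f) \<and>
    (\<exists>\<theta>. hl_hom s' br' al' s' br' al' \<theta> \<and> f \<circ> \<theta> = inv h \<circ> f)"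
proof safe
  fix \<theta> assume \<theta>: "\<theta> \<in> hl_Aut s' br' al'" and comm: "f \<circ> \<theta> = h \<circ> f"
  then show "\<exists>\<theta>. hl_hom s' br' al' s' br' al' \<theta> \<and> f \<circ> \<theta> = h \<circ> f" by (auto simp: hl_Aut_def)
  have "bij \<theta>" "bij h" using \<theta> h by (simp_all add: hl_Aut_def)
  have "h (f (inv \<theta> x)) = f (\<theta> (inv \<theta> x))" for x using comm by (simp add: fun_eq_iff)
  then have "h (f (inv \<theta> x)) = f x" for x using \<open>bij \<theta>\<close> by (simp add: bij_is_surj surj_f_inv_f)
  then have "f \<circ> inv \<theta> = inv h \<circ> f" using bij_inv_eq_iff[OF \<open>bij h\<close>] by (simp add: fun_eq_iff)
  then show "\<exists>\<theta>. hl_hom s' br' al' s' br' al' \<theta> \<and> f \<circ> \<theta> = inv h \<circ> f"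
    using hl_Aut_inv[OF \<theta>] by (auto simp: hl_Aut_def)
next
  fix \<theta>1 \<theta>2
  assume \<theta>1: "hl_hom s' br' al' s' br' al' \<theta>1" "f \<circ> \<theta>1 = h \<circ> f"
    and \<theta>2: "hl_hom s' br' al' s' br' al' \<theta>2" "f \<circ> \<theta>2 = inv h \<circ> f"
  have "bij h" using h by (simp add: hl_Aut_def)
  have f_\<theta>1: "f (\<theta>1 x) = h (f x)" and f_\<theta>2: "f (\<theta>2 x) = inv h (f x)" for x
    using \<theta>1(2) \<theta>2(2) by (simp_all add: fun_eq_iff)
  note id = hl_hom_id[OF V'.vector_space_axioms]
  have "\<theta>2 \<circ> \<theta>1 = id"
    by (rule hl_hom_eq_if_f_comp_eq[OF hl_hom_comp[OF \<theta>1(1) \<theta>2(1)] id])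
      (use \<open>bij h\<close> in \<open>simp add: fun_eq_iff f_\<theta>1 f_\<theta>2 bij_is_inj\<close>)
  moreover have "\<theta>1 \<circ> \<theta>2 = id"
    by (rule hl_hom_eq_if_f_comp_eq[OF hl_hom_comp[OF \<theta>2(1) \<theta>1(1)] id])
      (use \<open>bij h\<close> in \<open>simp add: fun_eq_iff f_\<theta>1 f_\<theta>2 bij_is_surj surj_f_inv_f\<close>)
  ultimately have "bij \<theta>1" by (rule o_bij)
  then show "\<exists>\<theta>\<in>hl_Aut s' br' al'. f \<circ> \<theta> = h \<circ> f" using \<theta>1 by (auto simp: hl_Aut_def)
qed

lemma uce_map_inv_cancel:
  assumes h: "hl_hom s br al s br al h" and g: "hl_hom s br al s br al g" and "g \<circ> h = id"
    and X: "X \<in> ker_lift_U"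
  shows "uce_map al s br al g (uce_map al s br al h X) = X"
proof -
  obtain u where u: "u \<in> FSall" and X: "X = ucls s br al u" using X unfolding ker_lift_U_def by blast
  have "fpush h u \<in> FSall" using u by (simp add: FSall_def)
  then have "uce_map al s br al g (uce_map al s br al h X) = ucls s br al (fpush g (fpush h u))"
    by (simp add: X uce_map_ucls[OF h surj_al u] uce_map_ucls[OF g surj_al])
  also have "\<dots> = X" using u \<open>g \<circ> h = id\<close> by (simp add: X fpush_comp FSall_def id_def fpush_id)
  finally show ?thesis .
qed

lemma aut_lift_exists_iff:
  assumes h: "h \<in> hl_Aut s br al"
  shows "(\<exists>\<theta>\<in>hl_Aut s' br' al'. f \<circ> \<theta> = h \<circ> f) \<longleftrightarrow> uce_map al s br al h ` ker_lift_U = ker_lift_U"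
proof -
  have h_hom: "hl_hom s br al s br al h" and inv_hom: "hl_hom s br al s br al (inv h)" and "bij h"
    using h hl_Aut_inv[OF h] by (simp_all add: hl_Aut_def)
  then have "inv h \<circ> h = id" "h \<circ> inv h = id"
    by (simp_all add: bij_is_inj surj_iff[THEN iffD1, OF bij_is_surj])
  then have "uce_map al s br al h ` ker_lift_U = ker_lift_U \<longleftrightarrow>
      uce_map al s br al h ` ker_lift_U \<subseteq> ker_lift_U \<and> uce_map al s br al (inv h) ` ker_lift_U \<subseteq> ker_lift_U"
    by (intro image_eq_iff_mutually_inverse uce_map_inv_cancel h_hom inv_hom)
  then show ?thesis
    using aut_lift_exists_iff_hom_lifts[OF h] hom_lift_exists_iff[OF h_hom] hom_lift_exists_iff[OF inv_hom]
    by simp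
qed

lemma aut_lift_unique:
  assumes "\<theta>1 \<in> hl_Aut s' br' al'" "\<theta>2 \<in> hl_Aut s' br' al'" "f \<circ> \<theta>1 = h \<circ> f" "f \<circ> \<theta>2 = h \<circ> f"
  shows "\<theta>1 = \<theta>2"
  using assms hl_hom_eq_if_f_comp_eq by (simp add: hl_Aut_def)

lemma aut_lift_ex1:
  assumes h: "h \<in> hl_Aut s br al" and stable: "uce_map al s br al h ` ker_lift_U = ker_lift_U"
  shows "\<exists>!\<theta>. \<theta> \<in> hl_Aut s' br' al' \<and> f \<circ> \<theta> = h \<circ> f"
proof -
  obtain \<theta> where \<theta>: "\<theta> \<in> hl_Aut s' br' al'" "f \<circ> \<theta> = h \<circ> f"
    using aut_lift_exists_iff[OF h] stable by blast
  then show ?thesis using aut_lift_unique[OF _ \<theta>(1) _ \<theta>(2)] by blast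
qed

definition lift :: "('a \<Rightarrow> 'a) \<Rightarrow> 'b \<Rightarrow> 'b" where
  "lift h = (THE \<theta>. \<theta> \<in> hl_Aut s' br' al' \<and> f \<circ> \<theta> = h \<circ> f)"

lemma lift_eq:
  assumes "\<theta> \<in> hl_Aut s' br' al'" "f \<circ> \<theta> = h \<circ> f"
  shows "lift h = \<theta>"
  unfolding lift_def using assms aut_lift_unique by blast

lemma lift_image_ker:
  assumes "\<theta> \<in> hl_Aut s' br' al'" "h \<in> hl_Aut s br al" "f \<circ> \<theta> = h \<circ> f"
  shows "\<theta> ` hl_ker f = hl_ker f"
proof (rule image_hl_ker_eq)
  interpret H: linear s s h using assms(2) hl_hom_linear by (auto simp: hl_Aut_def)
  show "h 0 = 0" by (rule H.zero)
qed (use assms in \<open>simp_all add: hl_Aut_def bij_is_inj bij_is_surj\<close>)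

lemma descend_hom:
  assumes g: "hl_hom s' br' al' s' br' al' g" and ker: "g ` hl_ker f \<subseteq> hl_ker f"
  shows "\<exists>h. hl_hom s br al s br al h \<and> f \<circ> g = h \<circ> f"
proof -
  interpret G: linear s' s' g using g by (rule hl_hom_linear)
  define h where "h y = f (g (sec y))" for y
  have h_f: "h (f x) = f (g x)" for x
  proof -
    have "sec (f x) - x \<in> hl_ker f" by (simp add: hl_ker_def F.diff)
    then have "g (sec (f x) - x) \<in> hl_ker f" using ker by blast
    then show ?thesis by (simp add: h_def hl_ker_def G.diff F.diff)
  qed
  have "h (a + b) = h a + h b" "h (s c a) = s c (h a)" "h (br a b) = br (h a) (h b)" "h (al a) = al (h a)" for a b c
    using h_f[of "sec a + sec b"] h_f[of "s' c (sec a)"] h_f[of "br' (sec a) (sec b)"] h_f[of "al' (sec a)"]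
    by (simp_all add: h_def F.add F.scale G.add G.scale hl_hom_bracket[OF f_hom] hl_hom_alpha[OF f_hom]
        hl_hom_bracket[OF g] hl_hom_alpha[OF g])
  then have "hl_hom s br al s br al h"
    using V.vector_space_axioms by (simp add: hl_hom_def linear_iff fun_eq_iff)
  then show ?thesis using h_f by (auto simp: fun_eq_iff)
qed

lemma descend_aut:
  assumes g: "g \<in> hl_Aut s' br' al'" and ker: "g ` hl_ker f = hl_ker f"
  shows "\<exists>h\<in>hl_Aut s br al. f \<circ> g = h \<circ> f"
proof -
  have "bij g" using g by (simp add: hl_Aut_def)
  have "inv g ` hl_ker f = inv g ` g ` hl_ker f" using ker by simp
  also have "\<dots> = hl_ker f" using \<open>bij g\<close> by (simp add: bij_is_inj image_inv_f_f)
  finally have inv_ker: "inv g ` hl_ker f \<subseteq> hl_ker f" by simp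
  obtain h1 where h1: "hl_hom s br al s br al h1" "f \<circ> g = h1 \<circ> f"
    using descend_hom ker g by (simp add: hl_Aut_def) blast
  obtain h2 where h2: "f \<circ> inv g = h2 \<circ> f"
    using descend_hom[OF _ inv_ker] hl_Aut_inv[OF g] by (simp add: hl_Aut_def) blast
  have h1_f: "h1 (f x) = f (g x)" and h2_f: "h2 (f x) = f (inv g x)" for x
    using h1(2) h2 by (simp_all add: fun_eq_iff)
  have "h1 (h2 y) = y" "h2 (h1 y) = y" for y
    using h1_f[of "inv g (sec y)"] h2_f[of "sec y"] h1_f[of "sec y"] h2_f[of "g (sec y)"] \<open>bij g\<close>
    by (simp_all add: bij_is_inj bij_is_surj surj_f_inv_f)
  then have "bij h1" by (intro o_bij[of h2]) (simp_all add: fun_eq_iff)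
  then show ?thesis using h1 by (auto simp: hl_Aut_def)
qed

definition stable_auts :: "('a \<Rightarrow> 'a) set" where
  "stable_auts = {h \<in> hl_Aut s br al. uce_map al s br al h ` ker_lift_U = ker_lift_U}"

definition ker_preserving_auts :: "('b \<Rightarrow> 'b) set" where
  "ker_preserving_auts = {g \<in> hl_Aut s' br' al'. g ` hl_ker f = hl_ker f}"

lemma lift_stable_aut:
  assumes "h \<in> stable_auts"
  shows "lift h \<in> hl_Aut s' br' al'" "f \<circ> lift h = h \<circ> f"
proof -
  have h: "h \<in> hl_Aut s br al" and stable: "uce_map al s br al h ` ker_lift_U = ker_lift_U"
    using assms by (simp_all add: stable_auts_def)
  obtain \<theta> where "\<theta> \<in> hl_Aut s' br' al'" "f \<circ> \<theta> = h \<circ> f"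
    using aut_lift_exists_iff[OF h] stable by blast
  then show "lift h \<in> hl_Aut s' br' al'" "f \<circ> lift h = h \<circ> f" using lift_eq by simp_all
qed

lemma lift_comp:
  assumes "h1 \<in> stable_auts" "h2 \<in> stable_auts"
  shows "lift (h1 \<circ> h2) = lift h1 \<circ> lift h2"
proof (rule lift_eq)
  show "lift h1 \<circ> lift h2 \<in> hl_Aut s' br' al'"
    using assms lift_stable_aut(1) by (intro hl_Aut_comp)
  have "f (lift h1 (lift h2 x)) = h1 (h2 (f x))" for x
    using assms lift_stable_aut(2) by (metis comp_apply)
  then show "f \<circ> (lift h1 \<circ> lift h2) = h1 \<circ> h2 \<circ> f" by (simp add: fun_eq_iff)
qed

lemma bij_betw_lift: "bij_betw lift stable_auts ker_preserving_auts"
proof (rule bij_betw_imageI)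
  show "inj_on lift stable_auts"
  proof (rule inj_onI)
    fix h1 h2 assume h: "h1 \<in> stable_auts" "h2 \<in> stable_auts" "lift h1 = lift h2"
    have "h1 \<circ> f = h2 \<circ> f"
      using lift_stable_aut(2)[OF h(1)] lift_stable_aut(2)[OF h(2)] h(3) by simp
    then show "h1 = h2" by (intro surj_fun_eq[OF f_surj]) (simp add: fun_eq_iff)
  qed
  show "lift ` stable_auts = ker_preserving_auts"
  proof
    show "lift ` stable_auts \<subseteq> ker_preserving_auts"
    proof clarify
      fix h assume h: "h \<in> stable_auts"
      then have "lift h ` hl_ker f = hl_ker f"
        using lift_image_ker[OF lift_stable_aut(1)[OF h] _ lift_stable_aut(2)[OF h]]
        by (simp add: stable_auts_def)
      then show "lift h \<in> ker_preserving_auts"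
        using lift_stable_aut(1)[OF h] by (simp add: ker_preserving_auts_def)
    qed
    show "ker_preserving_auts \<subseteq> lift ` stable_auts"
    proof
      fix g assume g: "g \<in> ker_preserving_auts"
      have g_aut: "g \<in> hl_Aut s' br' al'" and ker: "g ` hl_ker f = hl_ker f"
        using g by (simp_all add: ker_preserving_auts_def)
      obtain h where h: "h \<in> hl_Aut s br al" and comm: "f \<circ> g = h \<circ> f"
        using descend_aut[OF g_aut ker] by blast
      have "uce_map al s br al h ` ker_lift_U = ker_lift_U"
        using g_aut comm by (subst aut_lift_exists_iff[OF h, symmetric]) blast
      then have "h \<in> stable_auts" using h by (simp add: stable_auts_def)
      moreover have "lift h = g" using lift_eq[OF g_aut comm] .
      ultimately show "g \<in> lift ` stable_auts" by blast
    qed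
  qed
qed

end

theorem theorem4p3:
  fixes s' :: "'k::field \<Rightarrow> 'b::ab_group_add \<Rightarrow> 'b" and br' :: "'b \<Rightarrow> 'b \<Rightarrow> 'b" and al' :: "'b \<Rightarrow> 'b"
    and s :: "'k \<Rightarrow> 'a::ab_group_add \<Rightarrow> 'a" and br :: "'a \<Rightarrow> 'a \<Rightarrow> 'a" and al :: "'a \<Rightarrow> 'a"
    and f :: "'b \<Rightarrow> 'a"
  assumes L': "hom_leibniz s' br' al'"
    and L: "hom_leibniz s br al"
    and cover: "alpha_cover s' br' al' s br al f"
  defines "C \<equiv> uce_map al' s br al f ` uce_ker s' br' al'"
  shows
    "(\<forall>h \<in> hl_Aut s br al.
        (\<exists>\<theta> \<in> hl_Aut s' br' al'. f \<circ> \<theta> = h \<circ> f) \<longleftrightarrow> uce_map al s br al h ` C = C)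
     \<and> (\<forall>h \<in> hl_Aut s br al. uce_map al s br al h ` C = C \<longrightarrow>
          (\<exists>!\<theta>. \<theta> \<in> hl_Aut s' br' al' \<and> f \<circ> \<theta> = h \<circ> f) \<and>
          (\<forall>\<theta> \<in> hl_Aut s' br' al'. f \<circ> \<theta> = h \<circ> f \<longrightarrow> \<theta> ` hl_ker f = hl_ker f))
     \<and> (let G = {h \<in> hl_Aut s br al. uce_map al s br al h ` C = C};
            G' = {g \<in> hl_Aut s' br' al'. g ` hl_ker f = hl_ker f};
            \<Theta> = (\<lambda>h. THE \<theta>. \<theta> \<in> hl_Aut s' br' al' \<and> f \<circ> \<theta> = h \<circ> f)
        in bij_betw \<Theta> G G' \<and> (\<forall>h1 \<in> G. \<forall>h2 \<in> G. \<Theta> (h1 \<circ> h2) = \<Theta> h1 \<circ> \<Theta> h2))"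
proof -
  interpret hl_cover s' br' al' s br al f using L' L cover by (rule hl_cover.intro)
  have C: "C = ker_lift_U" unfolding C_def by (rule uce_map_f_uce_ker)
  have "\<forall>h \<in> hl_Aut s br al. (\<exists>\<theta> \<in> hl_Aut s' br' al'. f \<circ> \<theta> = h \<circ> f) \<longleftrightarrow> uce_map al s br al h ` C = C"
    unfolding C using aut_lift_exists_iff by simp
  moreover have "\<forall>h \<in> hl_Aut s br al. uce_map al s br al h ` C = C \<longrightarrow>
      (\<exists>!\<theta>. \<theta> \<in> hl_Aut s' br' al' \<and> f \<circ> \<theta> = h \<circ> f) \<and>
      (\<forall>\<theta> \<in> hl_Aut s' br' al'. f \<circ> \<theta> = h \<circ> f \<longrightarrow> \<theta> ` hl_ker f = hl_ker f)"
    unfolding C using aut_lift_ex1 lift_image_ker by simp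
  moreover have "bij_betw lift stable_auts ker_preserving_auts \<and>
      (\<forall>h1 \<in> stable_auts. \<forall>h2 \<in> stable_auts. lift (h1 \<circ> h2) = lift h1 \<circ> lift h2)"
    using bij_betw_lift lift_comp by blast
  ultimately show ?thesis
    unfolding Let_def C lift_def[symmetric] stable_auts_def[symmetric] ker_preserving_auts_def[symmetric]
    by simp
qed

end
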